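(* Let $X, Y, Z$ be uncertain variables on a common set $\Omega$ with finite ranges. Then: (a) $\mathcal{L}_\star(X\rightarrow Y)\geq 0$; (b) $\mathcal{L}_\star(X\rightarrow Y)=0$ if and only if $X$ and $Y$ are unrelated; (c) $\mathcal{L}_\star(X\rightarrow Y)\leq H_0(X)$, with equality if $Y=X$; (d) if $X-Y-Z$ is a Markov chain, then $\mathcal{L}_\star(X\rightarrow Z)\leq \mathcal{L}_\star(X\rightarrow Y)$.
   Context: Let $\Omega$ be a set. An uncertain variable (uv) is a map $X:\Omega\to\mathbb{X}$ into some set; all uvs considered have finite ranges. The range of $X$ is $[\![X]\!]:=\{X(\omega):\omega\in\Omega\}$; the joint range of $X,Y$ is $[\![X,Y]\!]:=\{(X(\omega),Y(\omega)):\omega\in\Omega\}$; the conditional range is $[\![X\mid Y(\omega)=y]\!]:=\{X(\omega):\omega\in\Omega,\ Y(\omega)=y\}$, and similarly $[\![X\mid Z(\omega)=z,Y(\omega)=y]\!]:=\{X(\omega):\omega\in\Omega,\ Z(\omega)=z,\ Y(\omega)=y\}$. Uvs $X$ and $Y$ are unrelated if $[\![X\mid Y(\omega)=y]\!]=[\![X]\!]$ for all $y\in[\![Y]\!]$ and $[\![Y\mid X(\omega)=x]\!]=[\![Y]\!]$ for all $x\in[\![X]\!]$. Uvs $X,Y,Z$ form a Markov chain $X-Y-Z$ if $[\![X\mid Z(\omega)=z,Y(\omega)=y]\!]=[\![X\mid Y(\omega)=y]\!]$ for all $(z,y)\in[\![Z,Y]\!]$. The non-stochastic entropy is $H_0(X):=\log_2|[\![X]\!]|$.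 The non-stochastic brute-force guessing leakage from a uv $U$ to a uv $Y$ is $$\mathcal{L}(U\rightarrow Y):=\log_2\left(\frac{|[\![U]\!]|}{\min_{y\in[\![Y]\!]}|[\![U\mid Y(\omega)=y]\!]|}\right).$$ The maximal non-stochastic brute-force leakage from $X$ to $Y$ is $$\mathcal{L}_\star(X\rightarrow Y):=\sup_{g}\ \mathcal{L}(g\circ X\rightarrow Y),$$ where the supremum ranges over all finite sets $\mathcal{U}$ and all functions $g:[\![X]\!]\to\mathcal{U}$. *)

theory Defs
  imports Complex_Main
begin

text \<open>Uncertain variables are maps from a sample set Omega (a set over a type 'o)
  into some type. Only their values on Omega matter.\<close>

definition uv_range :: "'o set \<Rightarrow> ('o \<Rightarrow> 'x) \<Rightarrow> 'x set" where
  "uv_range \<Omega> X = X ` \<Omega>"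

definition uv_joint_range :: "'o set \<Rightarrow> ('o \<Rightarrow> 'x) \<Rightarrow> ('o \<Rightarrow> 'y) \<Rightarrow> ('x \<times> 'y) set" where
  "uv_joint_range \<Omega> X Y = (\<lambda>\<omega>. (X \<omega>, Y \<omega>)) ` \<Omega>"

definition uv_cond_range :: "'o set \<Rightarrow> ('o \<Rightarrow> 'x) \<Rightarrow> ('o \<Rightarrow> 'y) \<Rightarrow> 'y \<Rightarrow> 'x set" where
  "uv_cond_range \<Omega> X Y y = {X \<omega> | \<omega>. \<omega> \<in> \<Omega> \<and> Y \<omega> = y}"

definition uv_cond_range2 ::
  "'o set \<Rightarrow> ('o \<Rightarrow> 'x) \<Rightarrow> ('o \<Rightarrow> 'z) \<Rightarrow> 'z \<Rightarrow> ('o \<Rightarrow> 'y) \<Rightarrow> 'y \<Rightarrow> 'x set" where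
  "uv_cond_range2 \<Omega> X Z z Y y = {X \<omega> | \<omega>. \<omega> \<in> \<Omega> \<and> Z \<omega> = z \<and> Y \<omega> = y}"

definition unrelated :: "'o set \<Rightarrow> ('o \<Rightarrow> 'x) \<Rightarrow> ('o \<Rightarrow> 'y) \<Rightarrow> bool" where
  "unrelated \<Omega> X Y \<longleftrightarrow>
     (\<forall>y \<in> uv_range \<Omega> Y. uv_cond_range \<Omega> X Y y = uv_range \<Omega> X) \<and>
     (\<forall>x \<in> uv_range \<Omega> X. uv_cond_range \<Omega> Y X x = uv_range \<Omega> Y)"

definition markov_chain :: "'o set \<Rightarrow> ('o \<Rightarrow> 'x) \<Rightarrow> ('o \<Rightarrow> 'y) \<Rightarrow> ('o \<Rightarrow> 'z) \<Rightarrow> bool" where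
  "markov_chain \<Omega> X Y Z \<longleftrightarrow>
     (\<forall>(z, y) \<in> uv_joint_range \<Omega> Z Y. uv_cond_range2 \<Omega> X Z z Y y = uv_cond_range \<Omega> X Y y)"

definition H0 :: "'o set \<Rightarrow> ('o \<Rightarrow> 'x) \<Rightarrow> real" where
  "H0 \<Omega> X = log 2 (card (uv_range \<Omega> X))"

definition guess_leak :: "'o set \<Rightarrow> ('o \<Rightarrow> 'u) \<Rightarrow> ('o \<Rightarrow> 'y) \<Rightarrow> real" where
  "guess_leak \<Omega> U Y =
     log 2 (real (card (uv_range \<Omega> U)) /
            real (Min ((\<lambda>y. card (uv_cond_range \<Omega> U Y y)) ` uv_range \<Omega> Y)))"

text \<open>Every such g is, up to renaming of its (finite) codomain, a function into nat, and
  the leakage only depends on g through the partition of the range of X it induces,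
  so taking nat as codomain loses no generality.\<close>
definition max_leak :: "'o set \<Rightarrow> ('o \<Rightarrow> 'x) \<Rightarrow> ('o \<Rightarrow> 'y) \<Rightarrow> real" where
  "max_leak \<Omega> X Y = (SUP g :: 'x \<Rightarrow> nat. guess_leak \<Omega> (g \<circ> X) Y)"

end

theory Submission
  imports Defs
begin

text \<open>Let m be the smallest conditional range size, min over y of |[[X | Y = y]]|. For a
  coarsening g and a smallest cell C = [[X | Y = y0]] of g o X, only the points outside C
  can contribute new values, so |g[[X]]| <= |g C| + |[[X]]| - m and the guessing leakage of
  g o X is at most log2 (|[[X]]| - m + 1); collapsing a smallest cell of X to one point and
  keeping all other values distinct attains this bound. The four claims thus become facts
  about m: it is at least 1, it equals |[[X]]| exactly when every conditional range is full,
  it is 1 for Y = X, and along a Markov chain X - Y - Z every cell [[X | Z = z]] contains a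
  cell [[X | Y = y]].\<close>

lemma uv_range_comp: "uv_range \<Omega> (g \<circ> X) = g ` uv_range \<Omega> X"
  by (auto simp: uv_range_def)

lemma uv_range_nonempty: "\<Omega> \<noteq> {} \<Longrightarrow> uv_range \<Omega> X \<noteq> {}"
  by (simp add: uv_range_def)

lemma uv_cond_range_comp: "uv_cond_range \<Omega> (g \<circ> X) Y y = g ` uv_cond_range \<Omega> X Y y"
  by (auto simp: uv_cond_range_def)

lemma uv_cond_range_subset: "uv_cond_range \<Omega> X Y y \<subseteq> uv_range \<Omega> X"
  by (auto simp: uv_cond_range_def uv_range_def)

lemma uv_cond_range_nonempty: "y \<in> uv_range \<Omega> Y \<Longrightarrow> uv_cond_range \<Omega> X Y y \<noteq> {}"
  by (auto simp: uv_cond_range_def uv_range_def)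

lemma uv_cond_range_self: "x \<in> uv_range \<Omega> X \<Longrightarrow> uv_cond_range \<Omega> X X x = {x}"
  by (auto simp: uv_cond_range_def uv_range_def)

lemma finite_uv_cond_range: "finite (uv_range \<Omega> X) \<Longrightarrow> finite (uv_cond_range \<Omega> X Y y)"
  using uv_cond_range_subset finite_subset by metis

lemma card_uv_cond_range_pos:
  "finite (uv_range \<Omega> X) \<Longrightarrow> y \<in> uv_range \<Omega> Y \<Longrightarrow> 0 < card (uv_cond_range \<Omega> X Y y)"
  by (simp add: card_gt_0_iff finite_uv_cond_range uv_cond_range_nonempty)

lemma unrelated_iff_cond_range_full:
  "unrelated \<Omega> X Y \<longleftrightarrow> (\<forall>y \<in> uv_range \<Omega> Y. uv_cond_range \<Omega> X Y y = uv_range \<Omega> X)"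
proof
  assume full: "\<forall>y \<in> uv_range \<Omega> Y. uv_cond_range \<Omega> X Y y = uv_range \<Omega> X"
  have "uv_cond_range \<Omega> Y X x = uv_range \<Omega> Y" if "x \<in> uv_range \<Omega> X" for x
  proof (intro equalityI subsetI)
    fix y assume "y \<in> uv_range \<Omega> Y"
    then have "x \<in> uv_cond_range \<Omega> X Y y" using full that by simp
    then show "y \<in> uv_cond_range \<Omega> Y X x" by (auto simp: uv_cond_range_def)
  qed (rule uv_cond_range_subset[THEN subsetD])
  with full show "unrelated \<Omega> X Y" by (simp add: unrelated_def)
qed (simp add: unrelated_def)

definition min_cond_card :: "'o set \<Rightarrow> ('o \<Rightarrow> 'x) \<Rightarrow> ('o \<Rightarrow> 'y) \<Rightarrow> nat" where
  "min_cond_card \<Omega> X Y = Min ((\<lambda>y. card (uv_cond_range \<Omega> X Y y)) ` uv_range \<Omega> Y)"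

lemma guess_leak_eq:
  "guess_leak \<Omega> U Y = log 2 (real (card (uv_range \<Omega> U)) / real (min_cond_card \<Omega> U Y))"
  by (simp add: guess_leak_def min_cond_card_def)

lemma min_cond_card_le:
  "finite (uv_range \<Omega> Y) \<Longrightarrow> y \<in> uv_range \<Omega> Y \<Longrightarrow>
    min_cond_card \<Omega> X Y \<le> card (uv_cond_range \<Omega> X Y y)"
  by (simp add: min_cond_card_def)

lemma min_cond_card_attained:
  assumes "\<Omega> \<noteq> {}" and "finite (uv_range \<Omega> Y)"
  obtains y where "y \<in> uv_range \<Omega> Y" and "card (uv_cond_range \<Omega> X Y y) = min_cond_card \<Omega> X Y"
proof -
  have "min_cond_card \<Omega> X Y \<in> (\<lambda>y. card (uv_cond_range \<Omega> X Y y)) ` uv_range \<Omega> Y"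
    unfolding min_cond_card_def using assms by (simp add: uv_range_nonempty)
  then show ?thesis using that by auto
qed

lemma min_cond_card_pos:
  assumes "\<Omega> \<noteq> {}" and "finite (uv_range \<Omega> X)" and "finite (uv_range \<Omega> Y)"
  shows "0 < min_cond_card \<Omega> X Y"
  using min_cond_card_attained[OF assms(1,3)] card_uv_cond_range_pos[OF assms(2)] by metis

lemma min_cond_card_le_card:
  assumes "\<Omega> \<noteq> {}" and "finite (uv_range \<Omega> X)" and "finite (uv_range \<Omega> Y)"
  shows "min_cond_card \<Omega> X Y \<le> card (uv_range \<Omega> X)"
  using min_cond_card_attained[OF assms(1,3)] card_mono[OF assms(2) uv_cond_range_subset] by metis

lemma min_cond_card_eq_card_iff:
  assumes "\<Omega> \<noteq> {}" and "finite (uv_range \<Omega> X)" and "finite (uv_range \<Omega> Y)"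
  shows "min_cond_card \<Omega> X Y = card (uv_range \<Omega> X) \<longleftrightarrow>
    (\<forall>y \<in> uv_range \<Omega> Y. uv_cond_range \<Omega> X Y y = uv_range \<Omega> X)"
proof
  assume m: "min_cond_card \<Omega> X Y = card (uv_range \<Omega> X)"
  show "\<forall>y \<in> uv_range \<Omega> Y. uv_cond_range \<Omega> X Y y = uv_range \<Omega> X"
  proof
    fix y assume "y \<in> uv_range \<Omega> Y"
    then have "card (uv_range \<Omega> X) \<le> card (uv_cond_range \<Omega> X Y y)"
      using min_cond_card_le[OF assms(3), of y X] m by linarith
    then show "uv_cond_range \<Omega> X Y y = uv_range \<Omega> X"
      by (rule card_seteq[OF assms(2) uv_cond_range_subset])
  qed
next
  assume "\<forall>y \<in> uv_range \<Omega> Y. uv_cond_range \<Omega> X Y y = uv_range \<Omega> X"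
  then show "min_cond_card \<Omega> X Y = card (uv_range \<Omega> X)"
    using min_cond_card_attained[OF assms(1,3)] by metis
qed

lemma min_cond_card_self:
  assumes "\<Omega> \<noteq> {}" and "finite (uv_range \<Omega> X)"
  shows "min_cond_card \<Omega> X X = 1"
proof -
  obtain x where "x \<in> uv_range \<Omega> X" "card (uv_cond_range \<Omega> X X x) = min_cond_card \<Omega> X X"
    using min_cond_card_attained[OF assms] .
  then show ?thesis by (simp add: uv_cond_range_self)
qed

lemma min_cond_card_markov_chain_le:
  assumes "markov_chain \<Omega> X Y Z"
    and "\<Omega> \<noteq> {}" and "finite (uv_range \<Omega> X)" and "finite (uv_range \<Omega> Y)"
    and "finite (uv_range \<Omega> Z)"
  shows "min_cond_card \<Omega> X Y \<le> min_cond_card \<Omega> X Z"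
proof -
  obtain z where z: "z \<in> uv_range \<Omega> Z" "card (uv_cond_range \<Omega> X Z z) = min_cond_card \<Omega> X Z"
    using min_cond_card_attained[OF assms(2,5)] .
  then obtain \<omega> where \<omega>: "\<omega> \<in> \<Omega>" "Z \<omega> = z" by (auto simp: uv_range_def)
  have "(z, Y \<omega>) \<in> uv_joint_range \<Omega> Z Y" using \<omega> by (auto simp: uv_joint_range_def)
  then have "uv_cond_range2 \<Omega> X Z z Y (Y \<omega>) = uv_cond_range \<Omega> X Y (Y \<omega>)"
    using assms(1) unfolding markov_chain_def by auto
  then have "uv_cond_range \<Omega> X Y (Y \<omega>) \<subseteq> uv_cond_range \<Omega> X Z z"
    by (auto simp: uv_cond_range2_def uv_cond_range_def)
  then have "card (uv_cond_range \<Omega> X Y (Y \<omega>)) \<le> min_cond_card \<Omega> X Z"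
    unfolding z(2)[symmetric] by (rule card_mono[OF finite_uv_cond_range[OF assms(3)]])
  moreover have "Y \<omega> \<in> uv_range \<Omega> Y" using \<omega> by (simp add: uv_range_def)
  ultimately show ?thesis using min_cond_card_le[OF assms(4), of "Y \<omega>" X] by linarith
qed

lemma card_image_le_card_image_subset_plus:
  assumes "finite A" and "C \<subseteq> A"
  shows "card (g ` A) \<le> card (g ` C) + (card A - card C)"
proof -
  have "card (g ` A) \<le> card (g ` C \<union> g ` (A - C))"
    using assms by (intro card_mono) (auto intro: finite_subset)
  also have "\<dots> \<le> card (g ` C) + card (g ` (A - C))"
    by (rule card_Un_le)
  also have "card (g ` (A - C)) \<le> card (A - C)"
    using assms(1) by (simp add: card_image_le)
  also have "card (A - C) = card A - card C"
    using assms by (simp add: card_Diff_subset finite_subset)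
  finally show ?thesis by simp
qed

lemma guess_leak_comp_le:
  assumes "\<Omega> \<noteq> {}" and "finite (uv_range \<Omega> X)" and "finite (uv_range \<Omega> Y)"
  shows "guess_leak \<Omega> (g \<circ> X) Y
    \<le> log 2 (real (card (uv_range \<Omega> X) - min_cond_card \<Omega> X Y + 1))"
proof -
  let ?A = "uv_range \<Omega> X" and ?m = "min_cond_card \<Omega> X Y" and ?k = "min_cond_card \<Omega> (g \<circ> X) Y"
  have fin_gX: "finite (uv_range \<Omega> (g \<circ> X))" using assms(2) by (simp add: uv_range_comp)
  obtain y where y: "y \<in> uv_range \<Omega> Y" "card (g ` uv_cond_range \<Omega> X Y y) = ?k"
    using min_cond_card_attained[OF assms(1,3), of "g \<circ> X"] by (metis uv_cond_range_comp)
  have k_pos: "0 < ?k" using min_cond_card_pos[OF assms(1) fin_gX assms(3)] .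
  have "card (g ` ?A) \<le> ?k + (card ?A - card (uv_cond_range \<Omega> X Y y))"
    using card_image_le_card_image_subset_plus[OF assms(2) uv_cond_range_subset] y(2) by metis
  also have "\<dots> \<le> ?k + (card ?A - ?m)"
    using min_cond_card_le[OF assms(3) y(1), of X] by simp
  also have "\<dots> \<le> ?k * (card ?A - ?m + 1)"
    using k_pos by (cases ?k) auto
  finally have "real (card (g ` ?A)) \<le> real ?k * real (card ?A - ?m + 1)"
    by (metis of_nat_le_iff of_nat_mult)
  then have "real (card (g ` ?A)) / real ?k \<le> real (card ?A - ?m + 1)"
    using k_pos by (simp add: divide_le_eq mult.commute)
  moreover have "0 < card (g ` ?A)"
    using assms(1,2) by (simp add: card_gt_0_iff uv_range_nonempty)
  ultimately show ?thesis
    using k_pos by (simp add: guess_leak_eq uv_range_comp)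
qed

lemma guess_leak_comp_attained:
  fixes X :: "'o \<Rightarrow> 'x"
  assumes "\<Omega> \<noteq> {}" and "finite (uv_range \<Omega> X)" and "finite (uv_range \<Omega> Y)"
  obtains g :: "'x \<Rightarrow> nat" where "guess_leak \<Omega> (g \<circ> X) Y
    = log 2 (real (card (uv_range \<Omega> X) - min_cond_card \<Omega> X Y + 1))"
proof -
  let ?A = "uv_range \<Omega> X" and ?m = "min_cond_card \<Omega> X Y"
  obtain y where y: "y \<in> uv_range \<Omega> Y" "card (uv_cond_range \<Omega> X Y y) = ?m"
    using min_cond_card_attained[OF assms(1,3)] .
  let ?C = "uv_cond_range \<Omega> X Y y"
  obtain f :: "'x \<Rightarrow> nat" where f: "inj_on f ?A"
    using finite_imp_inj_to_nat_seg[OF assms(2)] by blast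
  define g where "g x = (if x \<in> ?C then 0 else Suc (f x))" for x
  have C_ne: "?C \<noteq> {}" using uv_cond_range_nonempty[OF y(1)] .
  have C_sub: "?C \<subseteq> ?A" by (rule uv_cond_range_subset)
  from C_ne C_sub have "g ` ?A = insert 0 (Suc ` f ` (?A - ?C))"
    by (auto simp: g_def)
  moreover have "card (Suc ` f ` (?A - ?C)) = card ?A - ?m"
    using f C_sub assms(2) y(2)
    by (simp add: card_image inj_on_diff image_image inj_on_def card_Diff_subset finite_subset)
  ultimately have card_gA: "card (g ` ?A) = card ?A - ?m + 1"
    using assms(2) by simp
  have "g ` ?C = {0}" using C_ne by (auto simp: g_def)
  then have "min_cond_card \<Omega> (g \<circ> X) Y \<le> 1"
    using min_cond_card_le[OF assms(3) y(1), of "g \<circ> X"] by (simp add: uv_cond_range_comp)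
  moreover have "0 < min_cond_card \<Omega> (g \<circ> X) Y"
    using min_cond_card_pos[OF assms(1) _ assms(3), of "g \<circ> X"] assms(2)
    by (simp add: uv_range_comp)
  ultimately have "min_cond_card \<Omega> (g \<circ> X) Y = 1" by simp
  then show ?thesis
    using that[of g] by (simp add: guess_leak_eq uv_range_comp card_gA)
qed

theorem max_leak_eq:
  fixes X :: "'o \<Rightarrow> 'x"
  assumes "\<Omega> \<noteq> {}" and "finite (uv_range \<Omega> X)" and "finite (uv_range \<Omega> Y)"
  shows "max_leak \<Omega> X Y = log 2 (real (card (uv_range \<Omega> X) - min_cond_card \<Omega> X Y + 1))"
proof -
  obtain g :: "'x \<Rightarrow> nat" where g: "guess_leak \<Omega> (g \<circ> X) Y
      = log 2 (real (card (uv_range \<Omega> X) - min_cond_card \<Omega> X Y + 1))"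
    using guess_leak_comp_attained[OF assms] .
  have "guess_leak \<Omega> (h \<circ> X) Y \<le> guess_leak \<Omega> (g \<circ> X) Y" for h :: "'x \<Rightarrow> nat"
    unfolding g by (rule guess_leak_comp_le[OF assms])
  then show ?thesis
    unfolding max_leak_def g[symmetric] by (intro cSup_eq_maximum) auto
qed

lemma max_leak_nonneg:
  assumes "\<Omega> \<noteq> {}" and "finite (uv_range \<Omega> X)" and "finite (uv_range \<Omega> Y)"
  shows "0 \<le> max_leak \<Omega> X Y"
  by (simp add: max_leak_eq[OF assms])

lemma max_leak_eq_0_iff_unrelated:
  assumes "\<Omega> \<noteq> {}" and "finite (uv_range \<Omega> X)" and "finite (uv_range \<Omega> Y)"
  shows "max_leak \<Omega> X Y = 0 \<longleftrightarrow> unrelated \<Omega> X Y"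
proof -
  have "max_leak \<Omega> X Y = 0 \<longleftrightarrow> max_leak \<Omega> X Y \<le> 0"
    using max_leak_nonneg[OF assms] by linarith
  also have "\<dots> \<longleftrightarrow> min_cond_card \<Omega> X Y = card (uv_range \<Omega> X)"
    using min_cond_card_le_card[OF assms] by (auto simp: max_leak_eq[OF assms])
  finally show ?thesis
    by (simp add: min_cond_card_eq_card_iff[OF assms] unrelated_iff_cond_range_full)
qed

lemma max_leak_le_H0:
  assumes "\<Omega> \<noteq> {}" and "finite (uv_range \<Omega> X)" and "finite (uv_range \<Omega> Y)"
  shows "max_leak \<Omega> X Y \<le> H0 \<Omega> X"
proof -
  have "0 < card (uv_range \<Omega> X)"
    using assms(1,2) by (simp add: card_gt_0_iff uv_range_nonempty)
  then show ?thesis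
    using min_cond_card_pos[OF assms] by (simp add: max_leak_eq[OF assms] H0_def)
qed

lemma max_leak_self:
  assumes "\<Omega> \<noteq> {}" and "finite (uv_range \<Omega> X)"
  shows "max_leak \<Omega> X X = H0 \<Omega> X"
proof -
  have "0 < card (uv_range \<Omega> X)"
    using assms by (simp add: card_gt_0_iff uv_range_nonempty)
  then show ?thesis
    by (simp add: max_leak_eq[OF assms assms(2)] min_cond_card_self[OF assms] H0_def)
qed

lemma max_leak_markov_chain_le:
  assumes "markov_chain \<Omega> X Y Z"
    and "\<Omega> \<noteq> {}" and "finite (uv_range \<Omega> X)" and "finite (uv_range \<Omega> Y)"
    and "finite (uv_range \<Omega> Z)"
  shows "max_leak \<Omega> X Z \<le> max_leak \<Omega> X Y"
  using min_cond_card_markov_chain_le[OF assms] min_cond_card_le_card[OF assms(2,3,5)]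
  by (simp add: max_leak_eq[OF assms(2,3,4)] max_leak_eq[OF assms(2,3,5)])

theorem proposition3:
  fixes \<Omega> :: "'o set" and X :: "'o \<Rightarrow> 'x" and Y :: "'o \<Rightarrow> 'y" and Z :: "'o \<Rightarrow> 'z"
  assumes "\<Omega> \<noteq> {}"
    and "finite (uv_range \<Omega> X)" and "finite (uv_range \<Omega> Y)" and "finite (uv_range \<Omega> Z)"
  shows "max_leak \<Omega> X Y \<ge> 0
      \<and> (max_leak \<Omega> X Y = 0 \<longleftrightarrow> unrelated \<Omega> X Y)
      \<and> max_leak \<Omega> X Y \<le> H0 \<Omega> X
      \<and> max_leak \<Omega> X X = H0 \<Omega> X
      \<and> (markov_chain \<Omega> X Y Z \<longrightarrow> max_leak \<Omega> X Z \<le> max_leak \<Omega> X Y)"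
  using max_leak_nonneg[OF assms(1-3)] max_leak_eq_0_iff_unrelated[OF assms(1-3)]
    max_leak_le_H0[OF assms(1-3)] max_leak_self[OF assms(1,2)]
    max_leak_markov_chain_le[OF _ assms]
  by blast

end
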